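(* Let $Y$ be uniformly distributed on a finite set $\mathcal{Y}=\{y_1,\dots,y_m\}\subset\mathbb{R}$ of $m$ distinct values ($m\in\mathbb{N}$ arbitrary), and let $k\ge 0$ be the number of shared key bits. Then: (1) there exists an encoding scheme (with $r=m$ transmission symbols) whose eavesdropper distortion $D_{ach}(k)$ satisfies $$\Delta = D_{max}-D_{ach}(k)\le \frac{D_{max}}{2^k};$$ (2) with $d=\max_{y_i,y_j\in\mathcal{Y}}(y_i-y_j)$, there exists an encoding scheme (with $r=m$ transmission symbols) whose eavesdropper distortion satisfies $$\Delta = D_{max}-D_{ach}(k)\le \frac{d^2}{2^{2k}}.$$
   Context: Single-source setting. $Y$ is a real random variable taking values in a finite set $\mathcal{Y}=\{y_1,\dots,y_m\}\subset\mathbb{R}$ of distinct values. A source and a receiver share a secret key $K$, uniform on $\{1,\dots,2^k\}$ and independent of $Y$. An encoding scheme consists of a finite set of transmission symbols $\{\tau_1,\dots,\tau_r\}$ together with, for each key value $i\in\{1,\dots,2^k\}$, an injective map $\sigma_i:\mathcal{Y}\to\{\tau_1,\dots,\tau_r\}$ (injectivity guarantees that the receiver, knowing $K$, recovers $Y$ exactly); the source transmits $T=\sigma_K(Y)$. An eavesdropper observes $T$ but not $K$. Her distortion is $D_{ach}(k)=\min_{\hat f}\mathbb{E}[(Y-\hat f(T))^2]$, the minimum over all functions $\hat f$ of the observed symbol, and $D_{max}=\mathrm{var}(Y)$. Write $\Delta=D_{max}-D_{ach}(k)$. *)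

theory Defs
  imports Complex_Main
begin

text \<open>Y is uniform on the finite set Ys of reals; the key K is uniform on {1..2^k},
  independent of Y. Transmission symbols tau_1..tau_r are represented by {1..r}.\<close>

definition encoding_scheme :: "real set \<Rightarrow> nat \<Rightarrow> nat \<Rightarrow> (nat \<Rightarrow> real \<Rightarrow> nat) \<Rightarrow> bool" where
  "encoding_scheme Ys k r \<sigma> \<longleftrightarrow>
     (\<forall>i\<in>{1..2^k}. inj_on (\<sigma> i) Ys \<and> \<sigma> i ` Ys \<subseteq> {1..r})"

text \<open>Mean squared error E[(Y - fhat(T))^2] with T = sigma_K(Y), (Y,K) uniform on Ys x {1..2^k}.\<close>
definition eve_mse :: "real set \<Rightarrow> nat \<Rightarrow> (nat \<Rightarrow> real \<Rightarrow> nat) \<Rightarrow> (nat \<Rightarrow> real) \<Rightarrow> real" where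
  "eve_mse Ys k \<sigma> fhat =
     (\<Sum>i\<in>{1..2^k}. \<Sum>y\<in>Ys. (y - fhat (\<sigma> i y))^2) / (real (card Ys) * 2^k)"

definition D_ach :: "real set \<Rightarrow> nat \<Rightarrow> (nat \<Rightarrow> real \<Rightarrow> nat) \<Rightarrow> real" where
  "D_ach Ys k \<sigma> = (INF fhat. eve_mse Ys k \<sigma> fhat)"

definition mean_unif :: "real set \<Rightarrow> real" where
  "mean_unif Ys = (\<Sum>y\<in>Ys. y) / real (card Ys)"

definition D_max :: "real set \<Rightarrow> real" where
  "D_max Ys = (\<Sum>y\<in>Ys. (y - mean_unif Ys)^2) / real (card Ys)"

end

theory Submission
  imports Defs
begin

text \<open>Enumerate the values as e 0, ..., e (m - 1) and let key i send e ((u + c i) mod m) to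
  symbol u + 1. Behind a symbol the eavesdropper faces the values of all keys equally likely,
  so her best guess is their average and the leakage D_max - D_ach is at most the mean over u
  of (\<Sum>i. e ((u + c i) mod m) - \<mu>)^2, divided by 2^(2k). Since the rotations of a zero-sum
  sequence average to zero, the shifts can be chosen greedily with nonpositive cross terms,
  bounding these squares by 2^k m D_max. With consecutive shifts instead, each key-sum is a
  difference of two partial sums of the deviations, and the values can be listed so that all
  partial sums stay in [min - \<mu>, max - \<mu>], an interval of length at most d.\<close>

lemma inj_on_rotate_mod: "inj_on (\<lambda>u. (u + c) mod m) {..<m::nat}"
proof (rule linorder_inj_onI)
  fix u v assume "u < v" "u \<in> {..<m}" "v \<in> {..<m}"
  then have "\<not> m dvd (v + c) - (u + c)" by (auto dest: dvd_imp_le)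
  then show "(u + c) mod m \<noteq> (v + c) mod m"
    using mod_eq_dvd_iff_nat[of "u + c" "v + c" m] \<open>u < v\<close> by simp
qed auto

lemma bij_betw_rotate_mod: "0 < (m::nat) \<Longrightarrow> bij_betw (\<lambda>u. (u + c) mod m) {..<m} {..<m}"
  unfolding bij_betw_def using inj_on_rotate_mod[of c m]
  by (intro conjI endo_inj_surj) auto

lemma sum_rotate_mod: "0 < (m::nat) \<Longrightarrow> (\<Sum>u<m. F ((u + c) mod m)) = (\<Sum>j<m. F j)"
  using sum.reindex_bij_betw[OF bij_betw_rotate_mod] .

lemma sum_rotate_window:
  fixes a :: "nat \<Rightarrow> real"
  assumes a0: "(\<Sum>j<m. a j) = 0" and u: "u < m"
  shows "(\<Sum>i<L. a ((u + i) mod m)) = (\<Sum>j<(u + L) mod m. a j) - (\<Sum>j<u. a j)"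
proof (induction L)
  case 0
  then show ?case using u by simp
next
  case (Suc L)
  have step: "(\<Sum>j<Suc x mod m. a j) = (\<Sum>j<x. a j) + a x" if "x < m" for x
  proof (cases "Suc x < m")
    case False
    then have "m = Suc x" using that by simp
    then show ?thesis using a0 by simp
  qed simp
  have "(u + Suc L) mod m = Suc ((u + L) mod m) mod m" by (simp add: mod_Suc_eq)
  then show ?case using Suc step[of "(u + L) mod m"] u by simp
qed

lemma sum_power2_diff_ge:
  fixes b :: "'a \<Rightarrow> real"
  assumes "finite K" "K \<noteq> {}"
  shows "(\<Sum>i\<in>K. b i ^ 2) - (\<Sum>i\<in>K. b i)^2 / card K \<le> (\<Sum>i\<in>K. (b i - g)^2)"
proof -
  define n where "n = real (card K)"
  have n: "0 < n" using assms by (simp add: n_def card_gt_0_iff)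
  have "(\<Sum>i\<in>K. (b i - g)^2) = (\<Sum>i\<in>K. b i ^ 2) - 2 * g * (\<Sum>i\<in>K. b i) + n * g^2"
    by (simp add: power2_diff sum.distrib sum_subtractf sum_distrib_left sum_distrib_right n_def mult_ac)
  moreover have "0 \<le> (n * g - (\<Sum>i\<in>K. b i))^2 / n" using n by simp
  moreover have "(n * g - (\<Sum>i\<in>K. b i))^2 / n = n * g^2 - 2 * g * (\<Sum>i\<in>K. b i) + (\<Sum>i\<in>K. b i)^2 / n"
    using n by (simp add: power2_diff field_simps power2_eq_square)
  ultimately have "(\<Sum>i\<in>K. b i ^ 2) - (\<Sum>i\<in>K. b i)^2 / n \<le> (\<Sum>i\<in>K. (b i - g)^2)"
    by linarith
  then show ?thesis by (simp add: n_def)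
qed

lemma sum_diff_mean_unif: "finite Ys \<Longrightarrow> (\<Sum>y\<in>Ys. y - mean_unif Ys) = 0"
  by (cases "Ys = {}") (simp_all add: sum_subtractf mean_unif_def card_gt_0_iff)

lemma sum_power2_diff_mean_unif:
  "finite Ys \<Longrightarrow> (\<Sum>y\<in>Ys. (y - mean_unif Ys)^2) = card Ys * D_max Ys"
  by (cases "Ys = {}") (simp_all add: D_max_def card_gt_0_iff)

text \<open>Under key i, symbol u + 1 stands for the value E i u; each E i enumerates Ys.\<close>
definition codebook_scheme :: "nat \<Rightarrow> (nat \<Rightarrow> nat \<Rightarrow> real) \<Rightarrow> nat \<Rightarrow> real \<Rightarrow> nat" where
  "codebook_scheme m E i y = inv_into {..<m} (E i) y + 1"

lemma encoding_scheme_codebook: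
  assumes "\<And>i. i \<in> {1..2^k} \<Longrightarrow> bij_betw (E i) {..<m} Ys"
  shows "encoding_scheme Ys k m (codebook_scheme m E)"
  unfolding encoding_scheme_def codebook_scheme_def
proof (intro ballI conjI)
  fix i :: nat assume "i \<in> {1..2^k}"
  then have inv: "bij_betw (inv_into {..<m} (E i)) Ys {..<m}"
    using assms bij_betw_inv_into by blast
  then show "inj_on (\<lambda>y. inv_into {..<m} (E i) y + 1) Ys"
    by (auto simp: bij_betw_def inj_on_def)
  show "(\<lambda>y. inv_into {..<m} (E i) y + 1) ` Ys \<subseteq> {1..m}"
    using inv by (auto simp: bij_betw_def Suc_le_eq)
qed

lemma eve_mse_codebook_ge:
  assumes m: "0 < m" and E: "\<And>i. i \<in> {1..2^k} \<Longrightarrow> bij_betw (E i) {..<m} Ys"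
  shows "D_max Ys - (\<Sum>u<m. (\<Sum>i\<in>{1..2^k}. E i u - mean_unif Ys)^2) / (real m * (2^k)^2)
           \<le> eve_mse Ys k (codebook_scheme m E) f"
proof -
  define \<mu> where "\<mu> = mean_unif Ys"
  define N :: nat where "N = 2^k"
  define K where "K = {1..N}"
  define b where "b i u = E i u - \<mu>" for i u
  define Q where "Q = (\<Sum>u<m. (\<Sum>i\<in>K. b i u)^2)"
  have N: "0 < N" "card K = N" "finite K" "K \<noteq> {}" by (auto simp: N_def K_def)
  have EK: "bij_betw (E i) {..<m} Ys" if "i \<in> K" for i
    using E that by (simp add: K_def N_def)
  have "bij_betw (E 1) {..<m} Ys" using EK N(1) by (simp add: K_def)
  then have Ys: "finite Ys" "card Ys = m"
    using bij_betw_finite bij_betw_same_card by fastforce+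
  have per_key: "(\<Sum>y\<in>Ys. (y - f (codebook_scheme m E i y))^2) = (\<Sum>u<m. (b i u - (f (u + 1) - \<mu>))^2)"
    if "i \<in> K" for i
    using sum.reindex_bij_betw[OF EK[OF that], of "\<lambda>y. (y - f (codebook_scheme m E i y))^2", symmetric]
      EK[OF that] by (simp add: codebook_scheme_def bij_betw_inv_into_left b_def)
  define R where "R = (\<Sum>u<m. \<Sum>i\<in>K. (b i u - (f (u + 1) - \<mu>))^2)"
  have mse: "eve_mse Ys k (codebook_scheme m E) f = R / (real m * N)"
    unfolding eve_mse_def R_def using per_key by (simp add: Ys K_def N_def sum.swap[of _ "{..<m}"])
  have var: "(\<Sum>u<m. \<Sum>i\<in>K. b i u ^ 2) = N * (m * D_max Ys)"
  proof -
    have "(\<Sum>u<m. b i u ^ 2) = m * D_max Ys" if "i \<in> K" for i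
      using sum.reindex_bij_betw[OF EK[OF that], of "\<lambda>y. (y - \<mu>)^2"] sum_power2_diff_mean_unif[OF Ys(1)]
      by (simp add: b_def \<mu>_def Ys)
    then have "(\<Sum>i\<in>K. \<Sum>u<m. b i u ^ 2) = N * (m * D_max Ys)"
      using N by simp
    then show ?thesis by (simp add: sum.swap[of _ "{..<m}"])
  qed
  have "(\<Sum>u<m. (\<Sum>i\<in>K. b i u ^ 2) - (\<Sum>i\<in>K. b i u)^2 / N) \<le> R"
    unfolding R_def using sum_power2_diff_ge[OF N(3,4)] N(2) by (intro sum_mono) simp
  then have "N * (m * D_max Ys) - Q / N \<le> R"
    by (simp add: var Q_def sum_subtractf sum_divide_distrib)
  then have "(N * (m * D_max Ys) - Q / N) / (real m * N) \<le> R / (real m * N)"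
    by (rule divide_right_mono) simp
  moreover have "(N * (m * D_max Ys) - Q / N) / (real m * N) = D_max Ys - Q / (real m * N^2)"
    using m N by (simp add: field_simps power2_eq_square)
  ultimately have "D_max Ys - Q / (real m * N^2) \<le> eve_mse Ys k (codebook_scheme m E) f"
    by (simp add: mse)
  then show ?thesis by (simp add: Q_def b_def K_def N_def \<mu>_def sum_subtractf)
qed

lemma D_max_minus_D_ach_codebook_le:
  assumes "0 < m" and "\<And>i. i \<in> {1..2^k} \<Longrightarrow> bij_betw (E i) {..<m} Ys"
  shows "D_max Ys - D_ach Ys k (codebook_scheme m E)
           \<le> (\<Sum>u<m. (\<Sum>i\<in>{1..2^k}. E i u - mean_unif Ys)^2) / (real m * (2^k)^2)"
proof -
  have "D_max Ys - (\<Sum>u<m. (\<Sum>i\<in>{1..2^k}. E i u - mean_unif Ys)^2) / (real m * (2^k)^2)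
          \<le> D_ach Ys k (codebook_scheme m E)"
    unfolding D_ach_def by (rule cINF_greatest[OF UNIV_not_empty eve_mse_codebook_ge[OF assms]])
  then show ?thesis by linarith
qed

lemma exists_rotation_nonpos_correlation:
  fixes a P :: "nat \<Rightarrow> real"
  assumes m: "0 < m" and a0: "(\<Sum>j<m. a j) = 0"
  shows "\<exists>c<m. (\<Sum>u<m. P u * a ((u + c) mod m)) \<le> 0"
proof (rule ccontr)
  assume "\<not> ?thesis"
  then have "0 < (\<Sum>c<m. \<Sum>u<m. P u * a ((u + c) mod m))"
    using m by (rule_tac sum_pos) (auto simp: not_le)
  also have "\<dots> = (\<Sum>u<m. P u * (\<Sum>c<m. a ((c + u) mod m)))"
    by (subst sum.swap) (simp add: sum_distrib_left add.commute)
  also have "\<dots> = 0"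
    using a0 m by (simp add: sum_rotate_mod)
  finally show False by simp
qed

lemma exists_rotations_sum_power2_le:
  fixes a :: "nat \<Rightarrow> real" and N :: nat
  assumes m: "0 < m" and a0: "(\<Sum>j<m. a j) = 0"
  shows "\<exists>c. (\<Sum>u<m. (\<Sum>i\<in>{1..N}. a ((u + c i) mod m))^2) \<le> N * (\<Sum>j<m. a j ^ 2)"
proof (induction N)
  case 0
  show ?case by simp
next
  case (Suc N)
  then obtain c where c: "(\<Sum>u<m. (\<Sum>i\<in>{1..N}. a ((u + c i) mod m))^2) \<le> N * (\<Sum>j<m. a j ^ 2)"
    by blast
  define P where "P u = (\<Sum>i\<in>{1..N}. a ((u + c i) mod m))" for u
  obtain c' where cross: "(\<Sum>u<m. P u * a ((u + c') mod m)) \<le> 0"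
    using exists_rotation_nonpos_correlation[OF m a0] by blast
  define c2 where "c2 = c(Suc N := c')"
  have split: "(\<Sum>i\<in>{1..Suc N}. a ((u + c2 i) mod m)) = P u + a ((u + c') mod m)" for u
  proof -
    have "(\<Sum>i\<in>{1..N}. a ((u + c2 i) mod m)) = P u"
      unfolding P_def by (rule sum.cong) (auto simp: c2_def)
    then show ?thesis by (simp add: c2_def)
  qed
  have "(\<Sum>u<m. (\<Sum>i\<in>{1..Suc N}. a ((u + c2 i) mod m))^2)
      = (\<Sum>u<m. (P u)^2) + 2 * (\<Sum>u<m. P u * a ((u + c') mod m)) + (\<Sum>u<m. a ((u + c') mod m) ^ 2)"
    unfolding split power2_sum by (simp only: sum.distrib sum_distrib_left mult.assoc)
  also have "(\<Sum>u<m. a ((u + c') mod m) ^ 2) = (\<Sum>j<m. a j ^ 2)"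
    using m by (rule sum_rotate_mod)
  finally have "(\<Sum>u<m. (\<Sum>i\<in>{1..Suc N}. a ((u + c2 i) mod m))^2) \<le> Suc N * (\<Sum>j<m. a j ^ 2)"
    using c cross by (simp add: P_def distrib_right)
  then show ?case by blast
qed

lemma exists_step_within:
  fixes v :: "'a \<Rightarrow> real"
  assumes "finite A" "A \<noteq> {}" "\<forall>y\<in>A. lo \<le> v y \<and> v y \<le> hi"
    "lo \<le> s" "s \<le> hi" "s + sum v A = 0"
  shows "\<exists>x\<in>A. lo \<le> s + v x \<and> s + v x \<le> hi"
proof (cases "s \<le> 0")
  case True
  have "\<exists>x\<in>A. 0 \<le> v x"
  proof (rule ccontr)
    assume "\<not> ?thesis"
    then have "0 < (\<Sum>y\<in>A. - v y)" using assms(1,2) by (intro sum_pos) auto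
    then show False using True assms(6) by (simp add: sum_negf)
  qed
  then show ?thesis using True assms(3,4) by force
next
  case False
  have "\<exists>x\<in>A. v x < 0"
  proof (rule ccontr)
    assume "\<not> ?thesis"
    then have "0 \<le> sum v A" by (intro sum_nonneg) auto
    then show False using False assms(6) by linarith
  qed
  then show ?thesis using False assms(3,5) by force
qed

lemma exists_list_partial_sums_within:
  fixes v :: "'a \<Rightarrow> real"
  assumes "finite A" "\<forall>y\<in>A. lo \<le> v y \<and> v y \<le> hi"
    "lo \<le> s" "s \<le> hi" "s + sum v A = 0"
  shows "\<exists>xs. distinct xs \<and> set xs = A \<and>
           (\<forall>t\<le>length xs. lo \<le> s + (\<Sum>j<t. v (xs!j)) \<and> s + (\<Sum>j<t. v (xs!j)) \<le> hi)"
  using assms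
proof (induction "card A" arbitrary: A s)
  case 0
  then show ?case by (intro exI[of _ "[]"]) auto
next
  case (Suc n)
  then obtain x where x: "x \<in> A" "lo \<le> s + v x" "s + v x \<le> hi"
    using exists_step_within[of A lo v hi s] by fastforce
  have "(s + v x) + sum v (A - {x}) = 0" "n = card (A - {x})"
    using Suc x(1) by (simp_all add: sum_diff1)
  then obtain xs where xs: "distinct xs" "set xs = A - {x}"
    "\<forall>t\<le>length xs. lo \<le> (s + v x) + (\<Sum>j<t. v (xs!j)) \<and> (s + v x) + (\<Sum>j<t. v (xs!j)) \<le> hi"
    using Suc.hyps(1)[of "A - {x}" "s + v x"] Suc.prems x by auto
  have "lo \<le> s + (\<Sum>j<t. v ((x # xs) ! j)) \<and> s + (\<Sum>j<t. v ((x # xs) ! j)) \<le> hi"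
    if "t \<le> length (x # xs)" for t
  proof (cases t)
    case (Suc t')
    have "(\<Sum>j<t. v ((x # xs) ! j)) = v x + (\<Sum>j<t'. v (xs ! j))"
      unfolding Suc sum.lessThan_Suc_shift by simp
    then show ?thesis using xs(3) that Suc by (simp add: add.assoc)
  qed (use Suc.prems in simp)
  moreover have "distinct (x # xs)" "set (x # xs) = A" using xs x(1) by auto
  ultimately show ?case by blast
qed

lemma exists_balanced_enumeration:
  fixes Ys :: "real set"
  assumes fin: "finite Ys" and ne: "Ys \<noteq> {}"
  shows "\<exists>e. bij_betw e {..<card Ys} Ys \<and>
           (\<forall>t\<le>card Ys. Min Ys - mean_unif Ys \<le> (\<Sum>j<t. e j - mean_unif Ys)
                          \<and> (\<Sum>j<t. e j - mean_unif Ys) \<le> Max Ys - mean_unif Ys)"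
proof -
  define \<mu> where "\<mu> = mean_unif Ys"
  have sum_Ys: "(\<Sum>y\<in>Ys. y) = card Ys * \<mu>"
    using fin ne by (simp add: \<mu>_def mean_unif_def card_gt_0_iff)
  have "card Ys * Min Ys \<le> card Ys * \<mu>" "card Ys * \<mu> \<le> card Ys * Max Ys"
    unfolding sum_Ys[symmetric] using fin by (auto intro: sum_bounded_below sum_bounded_above)
  then have "Min Ys \<le> \<mu>" "\<mu> \<le> Max Ys"
    using fin ne by (simp_all add: card_gt_0_iff)
  moreover have "\<forall>y\<in>Ys. Min Ys - \<mu> \<le> y - \<mu> \<and> y - \<mu> \<le> Max Ys - \<mu>"
    using fin by simp
  ultimately obtain xs where xs: "distinct xs" "set xs = Ys"
    "\<forall>t\<le>length xs. Min Ys - \<mu> \<le> 0 + (\<Sum>j<t. xs!j - \<mu>) \<and> 0 + (\<Sum>j<t. xs!j - \<mu>) \<le> Max Ys - \<mu>"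
    using exists_list_partial_sums_within[of Ys "Min Ys - \<mu>" "\<lambda>y. y - \<mu>" "Max Ys - \<mu>" 0]
      fin sum_diff_mean_unif[OF fin] by (auto simp: \<mu>_def)
  moreover have "bij_betw (nth xs) {..<card Ys} Ys"
    using xs(1,2) distinct_card[OF xs(1)] by (intro bij_betw_nth) auto
  ultimately show ?thesis using distinct_card[OF xs(1)] by (auto simp: \<mu>_def)
qed

lemma exists_rotation_scheme_leakage_le:
  fixes c :: "nat \<Rightarrow> nat"
  assumes m: "0 < m" and e: "bij_betw e {..<m} Ys"
    and Q: "(\<Sum>u<m. (\<Sum>i\<in>{1..2^k}. e ((u + c i) mod m) - mean_unif Ys)^2) \<le> real m * (2^k)^2 * B"
  shows "\<exists>\<sigma>. encoding_scheme Ys k m \<sigma> \<and> D_max Ys - D_ach Ys k \<sigma> \<le> B"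
proof -
  have E: "bij_betw (\<lambda>u. e ((u + c i) mod m)) {..<m} Ys" for i
    using bij_betw_trans[OF bij_betw_rotate_mod[OF m] e] by (simp add: comp_def)
  have pos: "0 < real m * (2^k)^2" using m by simp
  have "D_max Ys - D_ach Ys k (codebook_scheme m (\<lambda>i u. e ((u + c i) mod m)))
          \<le> (\<Sum>u<m. (\<Sum>i\<in>{1..2^k}. e ((u + c i) mod m) - mean_unif Ys)^2) / (real m * (2^k)^2)"
    by (rule D_max_minus_D_ach_codebook_le[OF m E])
  also have "\<dots> \<le> real m * (2^k)^2 * B / (real m * (2^k)^2)"
    using Q pos by (intro divide_right_mono) simp_all
  also have "\<dots> = B" using m by simp
  finally have "D_max Ys - D_ach Ys k (codebook_scheme m (\<lambda>i u. e ((u + c i) mod m))) \<le> B" .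
  moreover have "encoding_scheme Ys k m (codebook_scheme m (\<lambda>i u. e ((u + c i) mod m)))"
    using E by (rule encoding_scheme_codebook)
  ultimately show ?thesis by blast
qed

lemma exists_rotation_scheme_leakage_le_D_max:
  assumes m: "0 < m" and e: "bij_betw e {..<m} Ys"
  shows "\<exists>\<sigma>. encoding_scheme Ys k m \<sigma> \<and> D_max Ys - D_ach Ys k \<sigma> \<le> D_max Ys / 2^k"
proof -
  define a where "a j = e j - mean_unif Ys" for j
  have Ys: "finite Ys" "card Ys = m"
    using bij_betw_finite[OF e] bij_betw_same_card[OF e] by simp_all
  have a0: "(\<Sum>j<m. a j) = 0"
    using sum.reindex_bij_betw[OF e, of "\<lambda>y. y - mean_unif Ys"] sum_diff_mean_unif[OF Ys(1)]
    by (simp add: a_def)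
  have aD: "(\<Sum>j<m. a j ^ 2) = m * D_max Ys"
    using sum.reindex_bij_betw[OF e, of "\<lambda>y. (y - mean_unif Ys)^2"] sum_power2_diff_mean_unif[OF Ys(1)]
    by (simp add: a_def Ys)
  obtain c :: "nat \<Rightarrow> nat" where "(\<Sum>u<m. (\<Sum>i\<in>{1..2^k}. a ((u + c i) mod m))^2) \<le> 2^k * (m * D_max Ys)"
    using exists_rotations_sum_power2_le[OF m a0, of "2^k"] aD by auto
  moreover have "real m * (2^k)^2 * (D_max Ys / 2^k) = 2^k * (m * D_max Ys)"
    by (simp add: power2_eq_square)
  ultimately have "(\<Sum>u<m. (\<Sum>i\<in>{1..2^k}. e ((u + c i) mod m) - mean_unif Ys)^2)
               \<le> real m * (2^k)^2 * (D_max Ys / 2^k)"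
    by (simp add: a_def)
  then show ?thesis using exists_rotation_scheme_leakage_le[OF m e, where c = c] by blast
qed

lemma exists_rotation_scheme_leakage_le_partial_sums:
  assumes m: "0 < m" and e: "bij_betw e {..<m} Ys"
    and partial: "\<forall>t\<le>m. lo \<le> (\<Sum>j<t. e j - mean_unif Ys) \<and> (\<Sum>j<t. e j - mean_unif Ys) \<le> hi"
  shows "\<exists>\<sigma>. encoding_scheme Ys k m \<sigma> \<and> D_max Ys - D_ach Ys k \<sigma> \<le> (hi - lo)^2 / 2^(2*k)"
proof -
  define a where "a j = e j - mean_unif Ys" for j
  define S where "S t = (\<Sum>j<t. a j)" for t
  have "finite Ys" using bij_betw_finite[OF e] by simp
  then have a0: "(\<Sum>j<m. a j) = 0"
    using sum.reindex_bij_betw[OF e, of "\<lambda>y. y - mean_unif Ys"] sum_diff_mean_unif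
    by (simp add: a_def)
  have S: "lo \<le> S t \<and> S t \<le> hi" if "t \<le> m" for t
    using partial that by (simp add: S_def a_def)
  have window: "(\<Sum>i\<in>{1..2^k}. a ((u + (i - 1)) mod m))^2 \<le> (hi - lo)^2" if u: "u < m" for u
  proof -
    have "(\<Sum>i\<in>{1..2^k}. a ((u + (i - 1)) mod m)) = S ((u + 2^k) mod m) - S u"
      using sum_rotate_window[OF a0 u] by (simp add: sum.atLeast1_atMost_eq S_def)
    moreover have "(u + 2^k) mod m \<le> m" using m by (simp add: less_imp_le)
    ultimately have "\<bar>\<Sum>i\<in>{1..2^k}. a ((u + (i - 1)) mod m)\<bar> \<le> \<bar>hi - lo\<bar>"
      using S[of "(u + 2^k) mod m"] S[of u] u by (simp add: abs_le_iff)
    then show ?thesis by (simp only: abs_le_square_iff)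
  qed
  have "(\<Sum>u<m. (\<Sum>i\<in>{1..2^k}. a ((u + (i - 1)) mod m))^2) \<le> m * (hi - lo)^2"
    using sum_bounded_above[of "{..<m}", OF window] by simp
  moreover have "real m * (2^k)^2 * ((hi - lo)^2 / 2^(2*k)) = m * (hi - lo)^2"
    by (simp add: power_mult[symmetric] mult.commute[of k])
  ultimately have "(\<Sum>u<m. (\<Sum>i\<in>{1..2^k}. e ((u + (i - 1)) mod m) - mean_unif Ys)^2)
               \<le> real m * (2^k)^2 * ((hi - lo)^2 / 2^(2*k))"
    by (simp add: a_def)
  then show ?thesis using exists_rotation_scheme_leakage_le[OF m e, where c = "\<lambda>i. i - 1"] by blast
qed

lemma Max_minus_Min_le_Max_differences:
  fixes Ys :: "real set"
  assumes "finite Ys" "Ys \<noteq> {}"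
  shows "Max Ys - Min Ys \<le> Max {a - b | a b. a \<in> Ys \<and> b \<in> Ys}"
proof (rule Max_ge)
  have "{a - b | a b. a \<in> Ys \<and> b \<in> Ys} = (\<lambda>(a, b). a - b) ` (Ys \<times> Ys)" by auto
  then show "finite {a - b | a b. a \<in> Ys \<and> b \<in> Ys}" using assms(1) by simp
  show "Max Ys - Min Ys \<in> {a - b | a b. a \<in> Ys \<and> b \<in> Ys}" using assms Max_in Min_in by blast
qed

theorem theorem1:
  fixes Ys :: "real set" and k :: nat
  assumes "finite Ys" and "Ys \<noteq> {}"
  shows "(\<exists>\<sigma>. encoding_scheme Ys k (card Ys) \<sigma> \<and>
            D_max Ys - D_ach Ys k \<sigma> \<le> D_max Ys / 2^k)
       \<and> (\<exists>\<sigma>. encoding_scheme Ys k (card Ys) \<sigma> \<and>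
            D_max Ys - D_ach Ys k \<sigma> \<le>
              (Max {a - b | a b. a \<in> Ys \<and> b \<in> Ys})^2 / 2^(2*k))"
proof -
  have m: "0 < card Ys" using assms by (simp add: card_gt_0_iff)
  obtain e where e: "bij_betw e {..<card Ys} Ys"
    and balanced: "\<forall>t\<le>card Ys. Min Ys - mean_unif Ys \<le> (\<Sum>j<t. e j - mean_unif Ys)
                          \<and> (\<Sum>j<t. e j - mean_unif Ys) \<le> Max Ys - mean_unif Ys"
    using exists_balanced_enumeration[OF assms] by blast
  have "(Max Ys - Min Ys)^2 \<le> (Max {a - b | a b. a \<in> Ys \<and> b \<in> Ys})^2"
    using Max_minus_Min_le_Max_differences[OF assms] assms by (intro power_mono) auto
  then have "(Max Ys - mean_unif Ys - (Min Ys - mean_unif Ys))^2 / 2^(2*k)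
               \<le> (Max {a - b | a b. a \<in> Ys \<and> b \<in> Ys})^2 / 2^(2*k)"
    by (simp add: divide_right_mono)
  with exists_rotation_scheme_leakage_le_partial_sums[OF m e balanced, where k = k]
  have "\<exists>\<sigma>. encoding_scheme Ys k (card Ys) \<sigma> \<and>
          D_max Ys - D_ach Ys k \<sigma> \<le> (Max {a - b | a b. a \<in> Ys \<and> b \<in> Ys})^2 / 2^(2*k)"
    by (blast intro: order_trans)
  then show ?thesis using exists_rotation_scheme_leakage_le_D_max[OF m e] by blast
qed

end
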